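(* Let $\alpha>0$, $n\in\mathbb N$, $0<a<b$ and let $x:[a,b]\to\mathbb R$ be a function of class $C^{n+1}$. Then, for $t\in(a,b]$, \[ {_a\mathcal{I}_t^\alpha} x(t)=\sum_{i=0}^{n}A_i(\alpha)\left(\ln\frac{t}{a}\right)^{\alpha+i} x_{i,0}(t)+\sum_{p=n+1}^\infty B(\alpha,p)\left(\ln\frac{t}{a}\right)^{\alpha+n-p}V_p(t), \] with \[ A_i(\alpha)=\frac{1}{\Gamma(\alpha+i+1)}\left[1+\sum_{p=n-i+1}^\infty\frac{\Gamma(p-\alpha-n)}{\Gamma(-\alpha-i)(p-n+i)!}\right],\qquad B(\alpha,p)=\frac{\Gamma(p-\alpha-n)}{\Gamma(\alpha)\Gamma(1-\alpha)(p-n)!}, \] \[ V_p(t)=\int_a^t (p-n)\left(\ln\frac{\tau}{a}\right)^{p-n-1}\frac{x(\tau)}{\tau}\,d\tau. \]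
   Context: For $0<a<b$ and $\alpha>0$ the left Hadamard fractional integral is ${_a\mathcal{I}_t^\alpha} x(t)=\frac{1}{\Gamma(\alpha)}\int_a^t \left(\ln\frac{t}{\tau}\right)^{\alpha-1}\frac{x(\tau)}{\tau}\,d\tau$. The functions $x_{k,0}$ are defined recursively by $x_{0,0}(t)=x(t)$ and $x_{k+1,0}(t)=t\frac{d}{dt}x_{k,0}(t)$ for $k\ge 0$. $\Gamma$ is Euler's gamma function. *)

theory Defs
  imports "HOL-Analysis.Analysis"
begin

definition Ck_on :: "nat \<Rightarrow> real set \<Rightarrow> (real \<Rightarrow> real) \<Rightarrow> bool" where
  "Ck_on k S f \<longleftrightarrow> (\<exists>D. D 0 = f \<and>
      (\<forall>j<k. \<forall>t\<in>S. (D j has_vector_derivative D (Suc j) t) (at t within S)) \<and>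
      continuous_on S (D k))"

definition hadamard_int :: "real \<Rightarrow> real \<Rightarrow> (real \<Rightarrow> real) \<Rightarrow> real \<Rightarrow> real" where
  "hadamard_int a \<alpha> x t =
     (1 / Gamma \<alpha>) * (LBINT \<tau>=a..t. (ln (t / \<tau>)) powr (\<alpha> - 1) * x \<tau> / \<tau>)"

fun xk0 :: "real \<Rightarrow> real \<Rightarrow> (real \<Rightarrow> real) \<Rightarrow> nat \<Rightarrow> real \<Rightarrow> real" where
  "xk0 a b x 0 = x"
| "xk0 a b x (Suc k) = (\<lambda>t. t * vector_derivative (xk0 a b x k) (at t within {a..b}))"

text \<open>The Gamma quotient Gamma(p-\<alpha>-n)/Gamma(-\<alpha>-i) equals
  pochhammer (-\<alpha>-i) (p-n+i), and Gamma(p-\<alpha>-n)/Gamma(1-\<alpha>) equals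
  pochhammer (1-\<alpha>) (p-n-1); these are used so that the coefficients are
  meaningful also when the Gamma functions have poles (integer \<alpha>).\<close>
definition A_coef :: "nat \<Rightarrow> real \<Rightarrow> nat \<Rightarrow> real" where
  "A_coef n \<alpha> i = (1 / Gamma (\<alpha> + real i + 1)) *
     (1 + (\<Sum>q. (\<lambda>p. pochhammer (- \<alpha> - real i) (p + i - n) / fact (p + i - n)) (q + (n - i + 1))))"

definition B_coef :: "nat \<Rightarrow> real \<Rightarrow> nat \<Rightarrow> real" where
  "B_coef n \<alpha> p = pochhammer (1 - \<alpha>) (p - n - 1) / (Gamma \<alpha> * fact (p - n))"

definition V_fun :: "nat \<Rightarrow> real \<Rightarrow> (real \<Rightarrow> real) \<Rightarrow> nat \<Rightarrow> real \<Rightarrow> real" where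
  "V_fun n a x p t = (LBINT \<tau>=a..t. real (p - n) * (ln (\<tau> / a)) ^ (p - n - 1) * x \<tau> / \<tau>)"

end

theory Submission
  imports Defs
begin

text \<open>
  The coefficients A_i vanish: with \<beta> = \<alpha> + i > 0 their bracket is
  1 + \<Sum>(k \<ge> 1) (-\<beta>)_k / k!, the binomial series of (1 - 1)^\<beta> = 0.
  What remains is the binomial expansion of the Hadamard kernel: with L = ln (t/a) and
  u = ln (\<tau>/a) in [0, L), one has
  ln (t/\<tau>)^(\<alpha>-1) = (L - u)^(\<alpha>-1) = \<Sum>k (1 - \<alpha>)_k / k! * L^(\<alpha>-1-k) * u^k,
  and integrating the k-th term against x(\<tau>)/\<tau> gives the term p = n + 1 + k of the series.
  Term-by-term integration is justified since the integral of u^k/\<tau> over [a, t] is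
  L^(k+1) / (k+1) and (1 - \<alpha>)_k / k! = O(k^(-\<alpha>)) by Gauss' limit for \<Gamma>,
  which makes the bounds summable.
\<close>

lemma pochhammer_over_fact_bound:
  fixes w :: real
  obtains C where "\<And>n. n \<ge> 1 \<Longrightarrow> \<bar>pochhammer w n / fact n\<bar> \<le> C * real n powr (w - 1)"
proof -
  have "convergent (\<lambda>n. ((- w) gchoose n) / ((-1)^n / exp ((- w + 1) * ln (real n))))"
    using gbinomial_asymptotic[of "- w"] by (auto simp: convergent_def)
  then obtain C where C: "\<And>n. \<bar>((- w) gchoose n) * exp ((1 - w) * ln (real n))\<bar> \<le> C"
    by (auto dest!: convergent_imp_Bseq simp: Bseq_def) blast
  show thesis
  proof
    fix n :: nat assume "n \<ge> 1"
    then have "exp ((1 - w) * ln (real n)) = real n powr (1 - w)"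
      by (simp add: powr_def)
    moreover have "(- w) gchoose n = (-1)^n * pochhammer w n / fact n"
      by (simp add: gbinomial_pochhammer)
    ultimately have "\<bar>pochhammer w n / fact n\<bar> * real n powr (1 - w) \<le> C"
      using C[of n] by (simp add: abs_mult power_abs)
    then show "\<bar>pochhammer w n / fact n\<bar> \<le> C * real n powr (w - 1)"
      using \<open>n \<ge> 1\<close> by (simp add: powr_diff powr_minus divide_simps mult_ac)
  qed
qed

lemma pochhammer_over_fact_sums_0:
  fixes \<beta> :: real
  assumes "\<beta> > 0"
  shows "(\<lambda>k. pochhammer (- \<beta>) k / fact k) sums 0"
proof -
  have partial_sum: "(\<Sum>k<Suc m. pochhammer (- \<beta>) k / fact k) = pochhammer (1 - \<beta>) m / fact m" for m
  proof -
    have "(\<Sum>k<Suc m. pochhammer (- \<beta>) k / fact k) = (\<Sum>k\<le>m. (\<beta> gchoose k) * (-1)^k)"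
      by (intro sum.cong) (auto simp: lessThan_Suc_atMost gbinomial_pochhammer)
    also have "\<dots> = (-1)^m * ((\<beta> - 1) gchoose m)"
      by (rule gbinomial_sum_lower_neg)
    also have "\<dots> = pochhammer (1 - \<beta>) m / fact m"
      by (simp add: gbinomial_pochhammer)
    finally show ?thesis .
  qed
  obtain C where C: "\<And>m. m \<ge> 1 \<Longrightarrow> \<bar>pochhammer (1 - \<beta>) m / fact m\<bar> \<le> C * real m powr (- \<beta>)"
    using pochhammer_over_fact_bound[of "1 - \<beta>"] by auto
  have "(\<lambda>m. C * real m powr (- \<beta>)) \<longlonglongrightarrow> 0"
    using assms by (intro tendsto_mult_right_zero tendsto_neg_powr filterlim_real_sequentially) auto
  then have "(\<lambda>m. pochhammer (1 - \<beta>) m / fact m) \<longlonglongrightarrow> 0"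
    by (rule Lim_null_comparison[rotated]) (use C in \<open>auto intro!: eventually_sequentiallyI[of 1]\<close>)
  then have "(\<lambda>m. \<Sum>k<Suc m. pochhammer (- \<beta>) k / fact k) \<longlonglongrightarrow> 0"
    unfolding partial_sum .
  then show ?thesis
    unfolding sums_def by (rule LIMSEQ_imp_Suc)
qed

lemma summable_pochhammer_over_fact_div_Suc:
  fixes \<alpha> :: real
  assumes "\<alpha> > 0"
  shows "summable (\<lambda>k. \<bar>pochhammer (1 - \<alpha>) k / fact k\<bar> / real (Suc k))"
proof -
  obtain C where C: "\<And>k. k \<ge> 1 \<Longrightarrow> \<bar>pochhammer (1 - \<alpha>) k / fact k\<bar> \<le> C * real k powr (- \<alpha>)"
    using pochhammer_over_fact_bound[of "1 - \<alpha>"] by auto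
  have "summable (\<lambda>k. C * real k powr (- \<alpha> - 1))"
    using assms by (intro summable_mult) (simp add: summable_real_powr_iff)
  then show ?thesis
  proof (rule summable_comparison_test'[where N = 1])
    fix k :: nat assume k: "k \<ge> 1"
    have "\<bar>pochhammer (1 - \<alpha>) k / fact k\<bar> / real (Suc k) \<le> C * real k powr (- \<alpha>) / real k"
      using C[OF k] k by (intro frac_le) (auto intro: order_trans[rotated])
    also have "\<dots> = C * real k powr (- \<alpha> - 1)"
      using k by (simp add: powr_diff)
    finally show "norm (\<bar>pochhammer (1 - \<alpha>) k / fact k\<bar> / real (Suc k)) \<le> C * real k powr (- \<alpha> - 1)"
      by simp
  qed
qed

lemma powr_diff_binomial_sums:
  fixes \<beta> L u :: real
  assumes "0 \<le> u" "u < L"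
  shows "(\<lambda>k. pochhammer (- \<beta>) k / fact k * L powr (\<beta> - real k) * u ^ k) sums (L - u) powr \<beta>"
proof -
  have "(\<beta> gchoose k) * (- u) ^ k = pochhammer (- \<beta>) k / fact k * u ^ k" for k
  proof -
    have "((-1::real) ^ k * (-1) ^ k) = 1"
      by (simp flip: power_mult_distrib)
    then show ?thesis
      by (simp add: gbinomial_pochhammer power_minus[of u])
  qed
  then have "(\<beta> gchoose k) * (- u) ^ k * L powr (\<beta> - real k)
      = pochhammer (- \<beta>) k / fact k * L powr (\<beta> - real k) * u ^ k" for k
    by (simp only: mult_ac)
  moreover have "(\<lambda>k. (\<beta> gchoose k) * (- u) ^ k * L powr (\<beta> - real k)) sums (- u + L) powr \<beta>"
    using assms by (intro gen_binomial_real') auto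
  ultimately show ?thesis
    by simp
qed

lemma powr_diff_binomial_summable_abs:
  fixes \<beta> L u :: real
  assumes "0 \<le> u" "u < L"
  shows "summable (\<lambda>k. \<bar>pochhammer (- \<beta>) k / fact k * L powr (\<beta> - real k) * u ^ k\<bar>)"
proof -
  have "summable (\<lambda>k. pochhammer (- \<beta>) k / fact k * L powr (\<beta> - real k) * ((u + L) / 2) ^ k)"
    using powr_diff_binomial_sums[of "(u + L) / 2" L \<beta>] assms by (auto dest: sums_summable)
  from powser_insidea[OF this, of u] assms show ?thesis
    by simp
qed

lemma Ck_on_imp_continuous_on:
  assumes "Ck_on k S f"
  shows "continuous_on S f"
proof -
  obtain D where D: "D 0 = f" "\<forall>j<k. \<forall>t\<in>S. (D j has_vector_derivative D (Suc j) t) (at t within S)"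
    and cont: "continuous_on S (D k)"
    using assms unfolding Ck_on_def by blast
  show ?thesis
  proof (cases k)
    case 0
    then show ?thesis using D(1) cont by simp
  next
    case (Suc j)
    then show ?thesis
      using D by (intro continuous_on_vector_derivative[of S f "D (Suc 0)"]) auto
  qed
qed

lemma interval_integral_ln_power_div:
  fixes a t :: real
  assumes "0 < a" "a \<le> t"
  shows "(LBINT \<tau>=a..t. ln (\<tau> / a) ^ k / \<tau>) = ln (t / a) ^ Suc k / real (Suc k)"
proof -
  have "(LBINT \<tau>=a..t. ln (\<tau> / a) ^ k / \<tau>)
      = ln (t / a) ^ Suc k / real (Suc k) - ln (a / a) ^ Suc k / real (Suc k)"
  proof (rule interval_integral_FTC_finite)
    show "continuous_on {min a t..max a t} (\<lambda>\<tau>. ln (\<tau> / a) ^ k / \<tau>)"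
      using assms by (intro continuous_intros) auto
  next
    fix \<tau> assume "min a t \<le> \<tau>" "\<tau> \<le> max a t"
    then have "\<tau> > 0" using assms by auto
    have "((\<lambda>\<tau>. ln (\<tau> / a)) has_real_derivative 1 / \<tau>) (at \<tau> within {min a t..max a t})"
      using assms \<open>\<tau> > 0\<close> by (auto intro!: derivative_eq_intros simp: field_simps)
    then have "((\<lambda>\<tau>. ln (\<tau> / a) ^ Suc k / real (Suc k)) has_real_derivative
        real (Suc k) * (1 / \<tau> * ln (\<tau> / a) ^ (Suc k - Suc 0)) / real (Suc k))
        (at \<tau> within {min a t..max a t})"
      by (intro DERIV_cdivide DERIV_power)
    then show "((\<lambda>\<tau>. ln (\<tau> / a) ^ Suc k / real (Suc k)) has_vector_derivative ln (\<tau> / a) ^ k / \<tau>)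
        (at \<tau> within {min a t..max a t})"
      by (simp add: has_real_derivative_iff_has_vector_derivative)
  qed
  then show ?thesis by simp
qed

lemma interval_integral_sums:
  fixes f :: "nat \<Rightarrow> real \<Rightarrow> real" and g :: "real \<Rightarrow> real"
  assumes "a \<le> b" "\<And>k. continuous_on {a..b} (f k)"
    and "\<And>\<tau>. \<tau> \<in> {a..<b} \<Longrightarrow> summable (\<lambda>k. \<bar>f k \<tau>\<bar>)"
    and "\<And>\<tau>. \<tau> \<in> {a..<b} \<Longrightarrow> (\<lambda>k. f k \<tau>) sums g \<tau>"
    and "summable (\<lambda>k. LBINT \<tau>=a..b. \<bar>f k \<tau>\<bar>)"
  shows "(\<lambda>k. LBINT \<tau>=a..b. f k \<tau>) sums (LBINT \<tau>=a..b. g \<tau>)"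
proof -
  \<comment> \<open>Working on {a..<b} avoids the endpoint b, where g may be singular.\<close>
  define F where "F = (\<lambda>k \<tau>. indicator {a..<b} \<tau> * f k \<tau>)"
  have as_integral: "(LBINT \<tau>=a..b. h \<tau>) = (\<integral>\<tau>. indicator {a..<b} \<tau> * h \<tau> \<partial>lborel)" for h :: "real \<Rightarrow> real"
    using assms(1) by (simp add: interval_integral_Ico set_lebesgue_integral_def)
  have "set_integrable lborel {a..<b} (f k)" for k
    by (rule set_integrable_subset[OF borel_integrable_atLeastAtMost'[OF assms(2)]]) auto
  then have integrable: "integrable lborel (F k)" for k
    by (simp add: F_def set_integrable_def)
  have summable_norm: "summable (\<lambda>k. norm (F k \<tau>))" for \<tau>
    using assms(3)[of \<tau>] by (cases "\<tau> \<in> {a..<b}") (simp_all add: F_def)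
  have "(\<integral>\<tau>. norm (F k \<tau>) \<partial>lborel) = (LBINT \<tau>=a..b. \<bar>f k \<tau>\<bar>)" for k
    by (simp add: as_integral F_def abs_mult)
  then have "(\<lambda>k. integral\<^sup>L lborel (F k)) sums (\<integral>\<tau>. (\<Sum>k. F k \<tau>) \<partial>lborel)"
    using assms(5) by (intro sums_integral integrable AE_I2 summable_norm) simp
  moreover have "(\<Sum>k. F k \<tau>) = indicator {a..<b} \<tau> * g \<tau>" for \<tau>
    using assms(4)[of \<tau>] by (cases "\<tau> \<in> {a..<b}") (simp_all add: F_def sums_iff)
  ultimately show ?thesis
    by (simp add: as_integral F_def)
qed

lemma interval_integral_abs_ln_power_term_le:
  fixes a t c M :: real and x :: "real \<Rightarrow> real"
  assumes "0 < a" "a \<le> t" "continuous_on {a..t} x" "\<And>\<tau>. \<tau> \<in> {a..t} \<Longrightarrow> \<bar>x \<tau>\<bar> \<le> M"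
  shows "(LBINT \<tau>=a..t. \<bar>c * ln (\<tau> / a) ^ k * x \<tau> / \<tau>\<bar>) \<le> \<bar>c\<bar> * M * (ln (t / a) ^ Suc k / real (Suc k))"
proof -
  have "(LBINT \<tau>=a..t. \<bar>c * ln (\<tau> / a) ^ k * x \<tau> / \<tau>\<bar>) = (LBINT \<tau>:{a..t}. \<bar>c * ln (\<tau> / a) ^ k * x \<tau> / \<tau>\<bar>)"
    using assms(2) by (rule interval_integral_Icc)
  also have "\<dots> \<le> (LBINT \<tau>:{a..t}. \<bar>c\<bar> * M * (ln (\<tau> / a) ^ k / \<tau>))"
  proof (rule set_integral_mono)
    show "set_integrable lborel {a..t} (\<lambda>\<tau>. \<bar>c * ln (\<tau> / a) ^ k * x \<tau> / \<tau>\<bar>)"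
      using assms by (intro borel_integrable_atLeastAtMost' continuous_intros) auto
    show "set_integrable lborel {a..t} (\<lambda>\<tau>. \<bar>c\<bar> * M * (ln (\<tau> / a) ^ k / \<tau>))"
      using assms by (intro borel_integrable_atLeastAtMost' continuous_intros) auto
  next
    fix \<tau> assume \<tau>: "\<tau> \<in> {a..t}"
    then have "\<tau> > 0" "ln (\<tau> / a) \<ge> 0"
      using assms(1) by auto
    then have "\<bar>c * ln (\<tau> / a) ^ k * x \<tau> / \<tau>\<bar> = \<bar>c\<bar> * (\<bar>x \<tau>\<bar> * ln (\<tau> / a) ^ k) / \<tau>"
      by (simp add: abs_mult)
    also have "\<dots> \<le> \<bar>c\<bar> * (M * ln (\<tau> / a) ^ k) / \<tau>"
      using assms(4)[OF \<tau>] \<open>\<tau> > 0\<close> \<open>ln (\<tau> / a) \<ge> 0\<close>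
      by (intro divide_right_mono mult_left_mono mult_right_mono) auto
    finally show "\<bar>c * ln (\<tau> / a) ^ k * x \<tau> / \<tau>\<bar> \<le> \<bar>c\<bar> * M * (ln (\<tau> / a) ^ k / \<tau>)"
      by simp
  qed
  also have "\<dots> = \<bar>c\<bar> * M * (LBINT \<tau>=a..t. ln (\<tau> / a) ^ k / \<tau>)"
    using assms(2) by (subst set_integral_mult_right) (simp add: interval_integral_Icc)
  finally show ?thesis
    using assms by (simp add: interval_integral_ln_power_div)
qed

lemma hadamard_kernel_binomial_sums:
  fixes \<alpha> a t :: real and x :: "real \<Rightarrow> real"
  assumes "\<alpha> > 0" "0 < a" "a < t" "continuous_on {a..t} x"
  shows "(\<lambda>k. LBINT \<tau>=a..t. pochhammer (1 - \<alpha>) k / fact k * ln (t / a) powr (\<alpha> - 1 - real k)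
            * ln (\<tau> / a) ^ k * x \<tau> / \<tau>)
         sums (LBINT \<tau>=a..t. ln (t / \<tau>) powr (\<alpha> - 1) * x \<tau> / \<tau>)"
proof -
  define L where "L = ln (t / a)"
  define c where "c k = pochhammer (1 - \<alpha>) k / fact k * L powr (\<alpha> - 1 - real k)" for k
  have "L > 0"
    using assms unfolding L_def by (simp add: divide_less_eq)
  have "bounded (x ` {a..t})"
    using compact_continuous_image[OF assms(4) compact_Icc] by (rule compact_imp_bounded)
  then obtain M where M: "\<And>\<tau>. \<tau> \<in> {a..t} \<Longrightarrow> \<bar>x \<tau>\<bar> \<le> M"
    unfolding bounded_iff by force
  have expansion: "(\<lambda>k. c k * ln (\<tau> / a) ^ k) sums ln (t / \<tau>) powr (\<alpha> - 1)"
    and abs_summable: "summable (\<lambda>k. \<bar>c k * ln (\<tau> / a) ^ k\<bar>)" if "\<tau> \<in> {a..<t}" for \<tau>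
  proof -
    have "0 \<le> ln (\<tau> / a)" "ln (\<tau> / a) < L"
      using that assms(2) unfolding L_def by (auto simp: divide_strict_right_mono)
    moreover have "L - ln (\<tau> / a) = ln (t / \<tau>)"
      using that assms(2) unfolding L_def by (simp add: ln_div)
    ultimately show "(\<lambda>k. c k * ln (\<tau> / a) ^ k) sums ln (t / \<tau>) powr (\<alpha> - 1)"
      and "summable (\<lambda>k. \<bar>c k * ln (\<tau> / a) ^ k\<bar>)"
      using powr_diff_binomial_sums[of "ln (\<tau> / a)" L "\<alpha> - 1"]
        powr_diff_binomial_summable_abs[of "ln (\<tau> / a)" L "\<alpha> - 1"]
      by (simp_all add: c_def)
  qed
  have integral_bound: "(LBINT \<tau>=a..t. \<bar>c k * ln (\<tau> / a) ^ k * x \<tau> / \<tau>\<bar>)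
      \<le> M * L powr \<alpha> * (\<bar>pochhammer (1 - \<alpha>) k / fact k\<bar> / real (Suc k))" for k
  proof -
    have "L ^ Suc k = L powr real (Suc k)"
      using \<open>L > 0\<close> by (rule powr_realpow[symmetric])
    then have "L powr (\<alpha> - 1 - real k) * L ^ Suc k = L powr \<alpha>"
      by (simp add: powr_add[symmetric])
    then have "\<bar>c k\<bar> * M * (L ^ Suc k / real (Suc k))
        = M * L powr \<alpha> * (\<bar>pochhammer (1 - \<alpha>) k / fact k\<bar> / real (Suc k))"
      by (simp add: c_def abs_mult)
    then show ?thesis
      using interval_integral_abs_ln_power_term_le[OF assms(2) _ assms(4) M, of "c k" k] assms(3)
      unfolding L_def by simp
  qed
  have integral_nonneg: "0 \<le> (LBINT \<tau>=a..t. \<bar>c k * ln (\<tau> / a) ^ k * x \<tau> / \<tau>\<bar>)" for k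
    using assms(3) by (simp add: interval_integral_Icc set_lebesgue_integral_def)
  have "summable (\<lambda>k. M * L powr \<alpha> * (\<bar>pochhammer (1 - \<alpha>) k / fact k\<bar> / real (Suc k)))"
    using summable_pochhammer_over_fact_div_Suc[OF assms(1)] by (rule summable_mult)
  then have summable_integrals: "summable (\<lambda>k. LBINT \<tau>=a..t. \<bar>c k * ln (\<tau> / a) ^ k * x \<tau> / \<tau>\<bar>)"
    by (rule summable_comparison_test'[where N = 0])
      (simp only: real_norm_def abs_of_nonneg[OF integral_nonneg] integral_bound)
  have "(\<lambda>k. LBINT \<tau>=a..t. c k * ln (\<tau> / a) ^ k * x \<tau> / \<tau>)
      sums (LBINT \<tau>=a..t. ln (t / \<tau>) powr (\<alpha> - 1) * x \<tau> / \<tau>)"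
  proof (rule interval_integral_sums)
    show "continuous_on {a..t} (\<lambda>\<tau>. c k * ln (\<tau> / a) ^ k * x \<tau> / \<tau>)" for k
      using assms by (intro continuous_intros) auto
  next
    fix \<tau> assume "\<tau> \<in> {a..<t}"
    then show "summable (\<lambda>k. \<bar>c k * ln (\<tau> / a) ^ k * x \<tau> / \<tau>\<bar>)"
      and "(\<lambda>k. c k * ln (\<tau> / a) ^ k * x \<tau> / \<tau>) sums (ln (t / \<tau>) powr (\<alpha> - 1) * x \<tau> / \<tau>)"
      using summable_mult2[OF abs_summable, of \<tau> "\<bar>x \<tau> / \<tau>\<bar>"] sums_mult2[OF expansion, of \<tau> "x \<tau> / \<tau>"]
      by (simp_all add: abs_mult)
  qed (use assms(3) summable_integrals in simp_all)
  then show ?thesis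
    by (simp add: c_def L_def)
qed

lemma B_coef_mult_V_fun_eq:
  "B_coef n \<alpha> (k + (n + 1)) * L powr (\<alpha> + real n - real (k + (n + 1))) * V_fun n a x (k + (n + 1)) t
   = 1 / Gamma \<alpha> * (LBINT \<tau>=a..t. pochhammer (1 - \<alpha>) k / fact k * L powr (\<alpha> - 1 - real k)
       * ln (\<tau> / a) ^ k * x \<tau> / \<tau>)"
proof -
  define I where "I = (LBINT \<tau>=a..t. ln (\<tau> / a) ^ k * x \<tau> / \<tau>)"
  define C where "C = pochhammer (1 - \<alpha>) k / fact k * L powr (\<alpha> - 1 - real k)"
  have exponent: "\<alpha> + real n - real (k + (n + 1)) = \<alpha> - 1 - real k"
    by simp
  have V: "V_fun n a x (k + (n + 1)) t = real (Suc k) * I"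
    unfolding V_fun_def I_def interval_lebesgue_integral_mult_right[symmetric]
    by (simp add: mult.assoc)
  have "(LBINT \<tau>=a..t. C * ln (\<tau> / a) ^ k * x \<tau> / \<tau>) = C * I"
    unfolding I_def interval_lebesgue_integral_mult_right[symmetric]
    by (simp add: mult.assoc)
  moreover have "B_coef n \<alpha> (k + (n + 1)) * L powr (\<alpha> + real n - real (k + (n + 1)))
      = 1 / Gamma \<alpha> * C / real (Suc k)"
    unfolding B_coef_def C_def exponent by (simp add: mult_ac)
  ultimately show ?thesis
    unfolding V C_def[symmetric] by simp
qed

lemma A_coef_eq_0:
  assumes "\<alpha> > 0" "i \<le> n"
  shows "A_coef n \<alpha> i = 0"
proof -
  have "(\<lambda>k. pochhammer (- (\<alpha> + real i)) k / fact k) sums 0"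
    using assms(1) by (intro pochhammer_over_fact_sums_0) simp
  then have "(\<lambda>q. pochhammer (- \<alpha> - real i) (Suc q) / fact (Suc q)) sums (- 1)"
    by (subst sums_Suc_iff) simp
  moreover have "q + (n - i + 1) + i - n = Suc q" for q
    using assms(2) by simp
  ultimately show ?thesis
    unfolding A_coef_def by (simp add: sums_iff)
qed

theorem theorem6p3:
  fixes \<alpha> a b t :: real and n :: nat and x :: "real \<Rightarrow> real"
  assumes "\<alpha> > 0" and "0 < a" and "a < b"
    and "Ck_on (Suc n) {a..b} x"
    and "t \<in> {a<..b}"
  shows "(\<lambda>q. B_coef n \<alpha> (q + (n + 1)) * (ln (t / a)) powr (\<alpha> + real n - real (q + (n + 1)))
              * V_fun n a x (q + (n + 1)) t)
         sums (hadamard_int a \<alpha> x t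
               - (\<Sum>i\<le>n. A_coef n \<alpha> i * (ln (t / a)) powr (\<alpha> + real i) * xk0 a b x i t))"
proof -
  have "continuous_on {a..t} x"
    by (rule continuous_on_subset[OF Ck_on_imp_continuous_on[OF assms(4)]]) (use assms(5) in auto)
  then have "(\<lambda>q. 1 / Gamma \<alpha> * (LBINT \<tau>=a..t. pochhammer (1 - \<alpha>) q / fact q
      * ln (t / a) powr (\<alpha> - 1 - real q) * ln (\<tau> / a) ^ q * x \<tau> / \<tau>)) sums hadamard_int a \<alpha> x t"
    unfolding hadamard_int_def using assms(1,2,5)
    by (intro sums_mult hadamard_kernel_binomial_sums) auto
  moreover have "(\<Sum>i\<le>n. A_coef n \<alpha> i * (ln (t / a)) powr (\<alpha> + real i) * xk0 a b x i t) = 0"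
    using assms(1) by (simp add: A_coef_eq_0)
  ultimately show ?thesis
    unfolding B_coef_mult_V_fun_eq by simp
qed

end
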